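(* Let $X\subseteq\mathcal{A}^{\mathbb{Z}}$ be an aperiodic subshift having at most $L$ right asymptotic tails and at most $L$ left asymptotic tails. Then $X$ has at most $2L^2\cdot(\#\mathcal{A})^2$ centered asymptotic pairs.
   Context: A pair $(x,\tilde x)$ of points of $X$ is right asymptotic if there is $k\in\mathbb{Z}$ with $x_{(k,\infty)}=\tilde x_{(k,\infty)}$ and $x_k\ne\tilde x_k$; it is centered right asymptotic if moreover $k=0$. A right asymptotic tail of $X$ is a one-sided sequence $x_{(0,\infty)}$ where $(x,\tilde x)$ is a centered right asymptotic pair in $X$. Left asymptotic pairs, centered left asymptotic pairs and left asymptotic tails are defined symmetrically (with $x_{(-\infty,k)}=\tilde x_{(-\infty,k)}$, $x_k\neq\tilde x_k$, and tails $x_{(-\infty,0)}$). A centered asymptotic pair is a centered right asymptotic pair or a centered left asymptotic pair. $X$ is aperiodic if it has no periodic points. *)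

theory Defs
  imports Main
begin

definition shift :: "(int \<Rightarrow> 'a) \<Rightarrow> int \<Rightarrow> 'a" where
  "shift x = (\<lambda>i. x (i + 1))"

text \<open>Closedness in the product topology: a point all of whose finite windows
occur in points of X belongs to X.\<close>
definition subshift :: "'a set \<Rightarrow> (int \<Rightarrow> 'a) set \<Rightarrow> bool" where
  "subshift A X \<longleftrightarrow> finite A \<and>
     X \<subseteq> {x. \<forall>i. x i \<in> A} \<and>
     shift ` X = X \<and>
     (\<forall>x. (\<forall>i. x i \<in> A) \<longrightarrow>
          (\<forall>n::nat. \<exists>y\<in>X. \<forall>i. \<bar>i\<bar> \<le> int n \<longrightarrow> y i = x i) \<longrightarrow> x \<in> X)"

definition aperiodic :: "(int \<Rightarrow> 'a) set \<Rightarrow> bool" where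
  "aperiodic X \<longleftrightarrow> \<not> (\<exists>x\<in>X. \<exists>p::int. p > 0 \<and> (\<forall>i. x (i + p) = x i))"

definition centered_right_asymptotic :: "(int \<Rightarrow> 'a) \<Rightarrow> (int \<Rightarrow> 'a) \<Rightarrow> bool" where
  "centered_right_asymptotic x y \<longleftrightarrow> (\<forall>i>0. x i = y i) \<and> x 0 \<noteq> y 0"

definition centered_left_asymptotic :: "(int \<Rightarrow> 'a) \<Rightarrow> (int \<Rightarrow> 'a) \<Rightarrow> bool" where
  "centered_left_asymptotic x y \<longleftrightarrow> (\<forall>i<0. x i = y i) \<and> x 0 \<noteq> y 0"

text \<open>Right tail x_(0,inf) encoded as nat-indexed sequence n |-> x (n+1);
left tail x_(-inf,0) encoded as n |-> x (-n-1).\<close>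
definition right_tails :: "(int \<Rightarrow> 'a) set \<Rightarrow> (nat \<Rightarrow> 'a) set" where
  "right_tails X = {(\<lambda>n. x (int n + 1)) | x. x \<in> X \<and>
      (\<exists>y\<in>X. centered_right_asymptotic x y)}"

definition left_tails :: "(int \<Rightarrow> 'a) set \<Rightarrow> (nat \<Rightarrow> 'a) set" where
  "left_tails X = {(\<lambda>n. x (- int n - 1)) | x. x \<in> X \<and>
      (\<exists>y\<in>X. centered_left_asymptotic x y)}"

definition centered_asymptotic_pairs :: "(int \<Rightarrow> 'a) set \<Rightarrow> ((int \<Rightarrow> 'a) \<times> (int \<Rightarrow> 'a)) set" where
  "centered_asymptotic_pairs X = {(x, y). x \<in> X \<and> y \<in> X \<and>
      (centered_right_asymptotic x y \<or> centered_left_asymptotic x y)}"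

end

theory Submission
  imports Defs
begin

text \<open>Call k a branch point of x \<in> X if some z \<in> X agrees with x strictly to the right of k
but not at k. The right tails of x after distinct branch points are distinct right asymptotic
tails of X, for otherwise x would be eventually periodic, and the periodic limit of its
translates would be a periodic point of X. Hence x has finitely many branch points, and the
tail after the leftmost one together with the symbol there determines x up to translation:
a disagreement further left would produce a branch point further left. In a centered right
asymptotic pair both points branch at 0, and the two translation offsets recovered from the
labels must vanish, since different offsets would again make the second point eventually
periodic. This bounds the right pairs by (L \<cdot> #A)^2; the left pairs are the right pairs of
the reflected subshift.\<close>

lemma subshift_translate_closed:
  assumes "subshift A X" and "x \<in> X"
  shows "(\<lambda>i. x (i + m)) \<in> X"
proof (induction m rule: int_induct[where k = 0])
  case base
  show ?case using assms(2) by simp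
next
  case (step1 m)
  then have "shift (\<lambda>i. x (i + m)) \<in> X"
    using assms(1) unfolding subshift_def by blast
  then show ?case by (simp add: shift_def algebra_simps)
next
  case (step2 m)
  then obtain z where "z \<in> X" and "shift z = (\<lambda>i. x (i + m))"
    using assms(1) unfolding subshift_def by (metis imageE)
  moreover have "z = (\<lambda>i. x (i + (m - 1)))"
  proof
    fix i
    have "shift z (i - 1) = x (i - 1 + m)" using \<open>shift z = _\<close> by simp
    then show "z i = x (i + (m - 1))" by (simp add: shift_def algebra_simps)
  qed
  ultimately show ?case by simp
qed

lemma subshift_symbols:
  assumes "subshift A X" and "x \<in> X"
  shows "x i \<in> A"
  using assms unfolding subshift_def by blast

lemma subshift_limit_of_translates:
  assumes ss: "subshift A X" and "x \<in> X"
    and lim: "\<forall>n::nat. \<exists>m. \<forall>i. \<bar>i\<bar> \<le> int n \<longrightarrow> x (i + m) = q i"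
  shows "q \<in> X"
proof -
  have translates: "(\<lambda>i. x (i + m)) \<in> X" for m
    using subshift_translate_closed[OF ss \<open>x \<in> X\<close>] .
  have windows: "\<forall>n::nat. \<exists>y\<in>X. \<forall>i. \<bar>i\<bar> \<le> int n \<longrightarrow> y i = q i"
  proof
    fix n :: nat
    obtain m where "\<forall>i. \<bar>i\<bar> \<le> int n \<longrightarrow> x (i + m) = q i" using lim by blast
    then show "\<exists>y\<in>X. \<forall>i. \<bar>i\<bar> \<le> int n \<longrightarrow> y i = q i"
      by (intro bexI[OF _ translates[of m]]) simp
  qed
  have "q i \<in> A" for i
  proof -
    obtain y where "y \<in> X" "y i = q i"
      using windows[rule_format, of "nat \<bar>i\<bar>"] by auto
    then show ?thesis using subshift_symbols[OF ss] by metis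
  qed
  then show ?thesis using ss windows unfolding subshift_def by blast
qed

lemma aperiodic_subshift_not_eventually_periodic:
  assumes ss: "subshift A X" and ap: "aperiodic X" and "x \<in> X" and "p > 0"
    and per: "\<forall>i\<ge>N. x (i + p) = x i"
  shows False
proof -
  \<comment> \<open>the periodic point that the translates of x converge to\<close>
  define q where "q i = x (N + (i - N) mod p)" for i
  have iter: "x (j + int t * p) = x j" if "j \<ge> N" for j t
  proof (induction t)
    case (Suc t)
    have "j + int t * p \<ge> N" using that \<open>p > 0\<close> by (simp add: add_increasing2)
    then have "x (j + int t * p + p) = x (j + int t * p)" using per by blast
    then show ?case using Suc by (simp add: algebra_simps)
  qed simp
  have x_eq_q: "x i = q i" if "i \<ge> N" for i
  proof -
    have "i = (N + (i - N) mod p) + int (nat ((i - N) div p)) * p"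
      using that \<open>p > 0\<close> by (simp add: pos_imp_zdiv_nonneg_iff algebra_simps)
    then show ?thesis unfolding q_def using iter \<open>p > 0\<close> by (metis pos_mod_sign le_add_same_cancel1)
  qed
  have q_periodic: "q (i + t * p) = q i" for i t
    unfolding q_def by (simp add: diff_add_eq[symmetric])
  have "\<forall>n::nat. \<exists>m. \<forall>i. \<bar>i\<bar> \<le> int n \<longrightarrow> x (i + m) = q i"
  proof
    fix n :: nat
    have "x (i + (int n + \<bar>N\<bar>) * p) = q i" if "\<bar>i\<bar> \<le> int n" for i
    proof -
      have "(int n + \<bar>N\<bar>) * 1 \<le> (int n + \<bar>N\<bar>) * p"
        using \<open>p > 0\<close> by (intro mult_left_mono) auto
      then have "i + (int n + \<bar>N\<bar>) * p \<ge> N" using that by simp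
      then show ?thesis using x_eq_q q_periodic by metis
    qed
    then show "\<exists>m. \<forall>i. \<bar>i\<bar> \<le> int n \<longrightarrow> x (i + m) = q i" by blast
  qed
  then have "q \<in> X" using subshift_limit_of_translates[OF ss \<open>x \<in> X\<close>] by blast
  moreover have "q (i + p) = q i" for i using q_periodic[of i 1] by simp
  ultimately show False using ap \<open>p > 0\<close> unfolding aperiodic_def by blast
qed

lemma aperiodic_subshift_asymptotic_offsets:
  assumes ss: "subshift A X" and ap: "aperiodic X" and "y \<in> X"
    and xy: "centered_right_asymptotic x y"
    and shifted: "centered_right_asymptotic (\<lambda>i. x (i + a)) (\<lambda>i. y (i + b))"
  shows "a = 0 \<and> b = 0"
proof (cases "a = b")
  case True
  have "x a \<noteq> y a" and after_a: "\<forall>i>0. x (i + a) = y (i + a)"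
    using shifted True unfolding centered_right_asymptotic_def by auto
  then have "\<not> a > 0" using xy unfolding centered_right_asymptotic_def by auto
  moreover have "\<not> a < 0" using after_a[rule_format, of "- a"] xy
    unfolding centered_right_asymptotic_def by auto
  ultimately show ?thesis using True by simp
next
  case False
  define N where "N = \<bar>a\<bar> + \<bar>b\<bar> + 1"
  have far: "y (j + a) = y (j + b)" if "j \<ge> N" for j
  proof -
    have "j > 0" "j + a > 0" using that unfolding N_def by linarith+
    then show ?thesis using xy shifted unfolding centered_right_asymptotic_def by metis
  qed
  have "y (i + \<bar>a - b\<bar>) = y i" if "i \<ge> N + min a b" for i
  proof (cases "a \<le> b")
    case True
    then show ?thesis using far[of "i - a"] that by (simp add: algebra_simps)
  next
    case False
    then show ?thesis using far[of "i - b"] that by (simp add: algebra_simps)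
  qed
  moreover have "\<bar>a - b\<bar> > 0" using False by simp
  ultimately show ?thesis
    using aperiodic_subshift_not_eventually_periodic[OF ss ap \<open>y \<in> X\<close>, of "\<bar>a - b\<bar>" "N + min a b"]
    by blast
qed

definition branch_points :: "(int \<Rightarrow> 'a) set \<Rightarrow> (int \<Rightarrow> 'a) \<Rightarrow> int set" where
  "branch_points X x = {k. \<exists>z\<in>X. (\<forall>i>k. z i = x i) \<and> z k \<noteq> x k}"

definition tail_after :: "(int \<Rightarrow> 'a) \<Rightarrow> int \<Rightarrow> nat \<Rightarrow> 'a" where
  "tail_after x k = (\<lambda>n. x (int n + 1 + k))"

definition first_branch_point :: "(int \<Rightarrow> 'a) set \<Rightarrow> (int \<Rightarrow> 'a) \<Rightarrow> int" where
  "first_branch_point X x = Min (branch_points X x)"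

definition right_label :: "(int \<Rightarrow> 'a) set \<Rightarrow> (int \<Rightarrow> 'a) \<Rightarrow> (nat \<Rightarrow> 'a) \<times> 'a" where
  "right_label X x = (tail_after x (first_branch_point X x), x (first_branch_point X x))"

lemma tail_after_in_right_tails:
  assumes ss: "subshift A X" and "x \<in> X" and "k \<in> branch_points X x"
  shows "tail_after x k \<in> right_tails X"
proof -
  obtain z where "z \<in> X" "\<forall>i>k. z i = x i" "z k \<noteq> x k"
    using \<open>k \<in> branch_points X x\<close> unfolding branch_points_def by blast
  then have "centered_right_asymptotic (\<lambda>i. x (i + k)) (\<lambda>i. z (i + k))"
    unfolding centered_right_asymptotic_def by auto
  moreover have "(\<lambda>i. x (i + k)) \<in> X" "(\<lambda>i. z (i + k)) \<in> X"
    using subshift_translate_closed[OF ss] \<open>x \<in> X\<close> \<open>z \<in> X\<close> by auto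
  ultimately show ?thesis
    unfolding right_tails_def tail_after_def by (auto intro!: exI[of _ "\<lambda>i. x (i + k)"] simp: ac_simps)
qed

lemma inj_tail_after:
  assumes ss: "subshift A X" and ap: "aperiodic X" and "x \<in> X"
  shows "inj (tail_after x)"
proof -
  have False if "tail_after x k = tail_after x k'" "k < k'" for k k'
  proof -
    have "x (i + (k' - k)) = x i" if "i \<ge> k + 1" for i
      using fun_cong[OF \<open>tail_after x k = _\<close>, of "nat (i - k - 1)"] that
      unfolding tail_after_def by (simp add: algebra_simps)
    then show False
      using aperiodic_subshift_not_eventually_periodic[OF ss ap \<open>x \<in> X\<close>, of "k' - k" "k + 1"]
        \<open>k < k'\<close> by simp
  qed
  then show ?thesis by (metis injI linorder_neqE)
qed

lemma finite_branch_points: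
  assumes ss: "subshift A X" and ap: "aperiodic X" and "finite (right_tails X)" and "x \<in> X"
  shows "finite (branch_points X x)"
proof -
  have "tail_after x ` branch_points X x \<subseteq> right_tails X"
    using tail_after_in_right_tails[OF ss \<open>x \<in> X\<close>] by blast
  then show ?thesis
    using inj_tail_after[OF ss ap \<open>x \<in> X\<close>] \<open>finite (right_tails X)\<close>
    by (meson finite_imageD finite_subset inj_on_subset subset_UNIV)
qed

lemma centered_right_asymptotic_branch_points:
  assumes "x \<in> X" "y \<in> X" "centered_right_asymptotic x y"
  shows "0 \<in> branch_points X x" and "0 \<in> branch_points X y"
proof -
  have "\<forall>i>0. y i = x i" "y 0 \<noteq> x 0"
    using assms(3) unfolding centered_right_asymptotic_def by auto
  then show "0 \<in> branch_points X x" using \<open>y \<in> X\<close> unfolding branch_points_def by blast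
  show "0 \<in> branch_points X y"
    using assms(1,3) unfolding branch_points_def centered_right_asymptotic_def by blast
qed

lemma branch_point_below:
  assumes "z \<in> X" "\<forall>i\<ge>k. z i = x i" "z \<noteq> x"
  shows "\<exists>j<k. j \<in> branch_points X x"
proof -
  define D where "D = {i. z i \<noteq> x i}"
  obtain i where "i \<in> D" using \<open>z \<noteq> x\<close> unfolding D_def by auto
  have "D \<subseteq> {..<k}" using assms(2) unfolding D_def by (auto simp: not_less[symmetric])
  then have "D \<inter> {i..} \<subseteq> {i..<k}" by auto
  then have "finite (D \<inter> {i..})" using finite_subset by blast
  define j where "j = Max (D \<inter> {i..})"
  have "j \<in> D" "j \<ge> i"
    using Max_in[OF \<open>finite (D \<inter> {i..})\<close>] \<open>i \<in> D\<close> unfolding j_def by auto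
  moreover have "z l = x l" if "l > j" for l
    using Max_ge[OF \<open>finite (D \<inter> {i..})\<close>, of l] that \<open>j \<ge> i\<close> unfolding j_def D_def by force
  ultimately have "j \<in> branch_points X x"
    using \<open>z \<in> X\<close> unfolding branch_points_def D_def by blast
  moreover have "j < k" using \<open>j \<in> D\<close> \<open>D \<subseteq> {..<k}\<close> by auto
  ultimately show ?thesis by blast
qed

lemma first_branch_point_mem_le:
  assumes "subshift A X" "aperiodic X" "finite (right_tails X)" "x \<in> X" "branch_points X x \<noteq> {}"
  shows "first_branch_point X x \<in> branch_points X x"
    and "\<And>j. j \<in> branch_points X x \<Longrightarrow> first_branch_point X x \<le> j"
  using finite_branch_points[OF assms(1-4)] assms(5) unfolding first_branch_point_def by auto

lemma right_label_eq_imp_translate: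
  assumes ss: "subshift A X" and ap: "aperiodic X" and fin: "finite (right_tails X)"
    and "x \<in> X" "x' \<in> X" "branch_points X x \<noteq> {}"
    and label: "right_label X x = right_label X x'"
  shows "x' = (\<lambda>i. x (i + (first_branch_point X x - first_branch_point X x')))"
proof -
  define k k' where "k = first_branch_point X x" and "k' = first_branch_point X x'"
  define z where "z = (\<lambda>i. x' (i + (k' - k)))"
  have "z \<in> X" unfolding z_def using subshift_translate_closed[OF ss \<open>x' \<in> X\<close>] .
  have "z i = x i" if "i \<ge> k" for i
  proof (cases "i = k")
    case True
    then show ?thesis using label unfolding right_label_def z_def k_def k'_def by simp
  next
    case False
    have "tail_after x' k' (nat (i - k - 1)) = tail_after x k (nat (i - k - 1))"
      using label unfolding right_label_def k_def k'_def by simp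
    then show ?thesis using False that unfolding tail_after_def z_def by (simp add: algebra_simps)
  qed
  moreover have "\<not> (\<exists>j<k. j \<in> branch_points X x)"
    using first_branch_point_mem_le(2)[OF ss ap fin \<open>x \<in> X\<close> \<open>branch_points X x \<noteq> {}\<close>]
    unfolding k_def by force
  ultimately have "z = x" using branch_point_below[OF \<open>z \<in> X\<close>] by blast
  show ?thesis
    unfolding k_def[symmetric] k'_def[symmetric]
  proof
    fix i
    have "z (i + (k - k')) = x (i + (k - k'))" using \<open>z = x\<close> by simp
    then show "x' i = x (i + (k - k'))" unfolding z_def by simp
  qed
qed

definition centered_right_asymptotic_pairs ::
    "(int \<Rightarrow> 'a) set \<Rightarrow> ((int \<Rightarrow> 'a) \<times> (int \<Rightarrow> 'a)) set" where
  "centered_right_asymptotic_pairs X = {(x, y). x \<in> X \<and> y \<in> X \<and> centered_right_asymptotic x y}"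

definition centered_left_asymptotic_pairs ::
    "(int \<Rightarrow> 'a) set \<Rightarrow> ((int \<Rightarrow> 'a) \<times> (int \<Rightarrow> 'a)) set" where
  "centered_left_asymptotic_pairs X = {(x, y). x \<in> X \<and> y \<in> X \<and> centered_left_asymptotic x y}"

lemma inj_on_right_label_pairs:
  assumes ss: "subshift A X" and ap: "aperiodic X" and fin: "finite (right_tails X)"
  shows "inj_on (map_prod (right_label X) (right_label X)) (centered_right_asymptotic_pairs X)"
proof (rule inj_onI, clarify)
  fix x y x' y'
  assume "(x, y) \<in> centered_right_asymptotic_pairs X" "(x', y') \<in> centered_right_asymptotic_pairs X"
    and "map_prod (right_label X) (right_label X) (x, y) = map_prod (right_label X) (right_label X) (x', y')"
  then have X: "x \<in> X" "y \<in> X" "x' \<in> X" "y' \<in> X"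
    and xy: "centered_right_asymptotic x y" and x'y': "centered_right_asymptotic x' y'"
    and labels: "right_label X x = right_label X x'" "right_label X y = right_label X y'"
    unfolding centered_right_asymptotic_pairs_def by auto
  have "branch_points X x \<noteq> {}" "branch_points X y \<noteq> {}"
    using centered_right_asymptotic_branch_points[OF X(1,2) xy] by auto
  then obtain a b where x': "x' = (\<lambda>i. x (i + a))" and y': "y' = (\<lambda>i. y (i + b))"
    using right_label_eq_imp_translate[OF ss ap fin X(1,3) _ labels(1)]
      right_label_eq_imp_translate[OF ss ap fin X(2,4) _ labels(2)] by metis
  have "a = 0 \<and> b = 0"
    using aperiodic_subshift_asymptotic_offsets[OF ss ap X(2) xy] x'y' unfolding x' y' .
  then show "x = x' \<and> y = y'" unfolding x' y' by simp
qed

lemma right_label_mem: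
  assumes "subshift A X" "aperiodic X" "finite (right_tails X)" "x \<in> X" "branch_points X x \<noteq> {}"
  shows "right_label X x \<in> right_tails X \<times> A"
  using tail_after_in_right_tails[OF assms(1,4) first_branch_point_mem_le(1)[OF assms]]
    subshift_symbols[OF assms(1,4)]
  unfolding right_label_def by simp

lemma centered_right_asymptotic_pairs_bound:
  assumes ss: "subshift A X" and ap: "aperiodic X" and fin: "finite (right_tails X)"
  shows "finite (centered_right_asymptotic_pairs X)"
    and "card (centered_right_asymptotic_pairs X) \<le> (card (right_tails X) * card A)^2"
proof -
  let ?T = "right_tails X \<times> A"
  let ?f = "map_prod (right_label X) (right_label X)"
  have "?f p \<in> ?T \<times> ?T" if p: "p \<in> centered_right_asymptotic_pairs X" for p
  proof -
    obtain x y where "p = (x, y)" and xy: "x \<in> X" "y \<in> X" "centered_right_asymptotic x y"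
      using p unfolding centered_right_asymptotic_pairs_def by auto
    moreover have "branch_points X x \<noteq> {}" "branch_points X y \<noteq> {}"
      using centered_right_asymptotic_branch_points[OF xy] by blast+
    ultimately show ?thesis
      using right_label_mem[OF ss ap fin xy(1)] right_label_mem[OF ss ap fin xy(2)] by simp
  qed
  then have image: "?f ` centered_right_asymptotic_pairs X \<subseteq> ?T \<times> ?T" by (rule image_subsetI)
  have "finite A" using ss unfolding subshift_def by blast
  then have finite: "finite (?T \<times> ?T)" using fin by simp
  note inj = inj_on_right_label_pairs[OF ss ap fin]
  show "finite (centered_right_asymptotic_pairs X)"
    using finite_imageD[OF finite_subset[OF image finite] inj] .
  have "card (centered_right_asymptotic_pairs X) \<le> card (?T \<times> ?T)"
    using card_inj_on_le[OF inj image finite] .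
  then show "card (centered_right_asymptotic_pairs X) \<le> (card (right_tails X) * card A)^2"
    by (simp only: card_cartesian_product power2_eq_square mult.commute mult.left_commute)
qed

definition reflect :: "(int \<Rightarrow> 'a) \<Rightarrow> int \<Rightarrow> 'a" where
  "reflect x = (\<lambda>i. x (- i))"

lemma reflect_reflect [simp]: "reflect (reflect x) = x"
  by (simp add: reflect_def)

lemma mem_reflect_image_iff: "x \<in> reflect ` X \<longleftrightarrow> reflect x \<in> X"
  by (metis image_iff reflect_reflect)

lemma subshift_reflect:
  assumes ss: "subshift A X"
  shows "subshift A (reflect ` X)"
proof -
  have symbols: "\<forall>i. x i \<in> A" if "x \<in> reflect ` X" for x
    using subshift_symbols[OF ss] that by (auto simp: reflect_def)
  have "shift (reflect x) \<in> reflect ` X" if "x \<in> X" for x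
  proof -
    have "shift (reflect x) = reflect (\<lambda>i. x (i + - 1))"
      by (simp add: shift_def reflect_def)
    then show ?thesis using subshift_translate_closed[OF ss that, of "- 1"] by blast
  qed
  moreover have "reflect x \<in> shift ` reflect ` X" if "x \<in> X" for x
  proof -
    have "reflect x = shift (reflect (\<lambda>i. x (i + 1)))"
      by (simp add: shift_def reflect_def)
    then show ?thesis using subshift_translate_closed[OF ss that] by blast
  qed
  ultimately have shift_invariant: "shift ` reflect ` X = reflect ` X"
    by blast
  have closed: "z \<in> reflect ` X"
    if zA: "\<forall>i. z i \<in> A"
      and windows: "\<forall>n::nat. \<exists>y\<in>reflect ` X. \<forall>i. \<bar>i\<bar> \<le> int n \<longrightarrow> y i = z i" for z
  proof -
    have "\<forall>n::nat. \<exists>y\<in>X. \<forall>i. \<bar>i\<bar> \<le> int n \<longrightarrow> y i = reflect z i"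
    proof
      fix n :: nat
      obtain y where "reflect y \<in> X" "\<forall>i. \<bar>i\<bar> \<le> int n \<longrightarrow> y i = z i"
        using windows mem_reflect_image_iff by blast
      then show "\<exists>y\<in>X. \<forall>i. \<bar>i\<bar> \<le> int n \<longrightarrow> y i = reflect z i"
        by (intro bexI[of _ "reflect y"]) (auto simp: reflect_def)
    qed
    moreover have "\<forall>i. reflect z i \<in> A" using zA by (simp add: reflect_def)
    ultimately have "reflect z \<in> X" using ss unfolding subshift_def by blast
    then show ?thesis by (simp add: mem_reflect_image_iff)
  qed
  have "finite A" using ss unfolding subshift_def by blast
  then show ?thesis unfolding subshift_def using symbols shift_invariant closed by blast
qed

lemma aperiodic_reflect:
  assumes "aperiodic X"
  shows "aperiodic (reflect ` X)"
proof -
  have "\<forall>i. x (i + p) = x i" if "\<forall>i. reflect x (i + p) = reflect x i" for x :: "int \<Rightarrow> 'a" and p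
  proof
    fix i
    show "x (i + p) = x i" using that[rule_format, of "- i - p"] by (simp add: reflect_def add.commute)
  qed
  then show ?thesis using assms unfolding aperiodic_def by blast
qed

lemma centered_left_asymptotic_iff_reflect:
  "centered_left_asymptotic x y \<longleftrightarrow> centered_right_asymptotic (reflect x) (reflect y)"
proof -
  have "(\<forall>i<0. x i = y i) \<longleftrightarrow> (\<forall>i>0. x (- i) = y (- i))"
    by (metis minus_minus neg_0_less_iff_less)
  then show ?thesis
    unfolding centered_left_asymptotic_def centered_right_asymptotic_def reflect_def by simp
qed

lemma right_tails_reflect: "right_tails (reflect ` X) = left_tails X"
proof -
  have "right_tails (reflect ` X) =
      {(\<lambda>n. reflect x (int n + 1)) | x.
        x \<in> X \<and> (\<exists>y\<in>X. centered_right_asymptotic (reflect x) (reflect y))}"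
    unfolding right_tails_def by blast
  also have "\<dots> = left_tails X"
    unfolding left_tails_def centered_left_asymptotic_iff_reflect by (simp add: reflect_def)
  finally show ?thesis .
qed

lemma centered_left_asymptotic_pairs_reflect:
  "centered_left_asymptotic_pairs X =
    map_prod reflect reflect ` centered_right_asymptotic_pairs (reflect ` X)"
proof -
  have "centered_right_asymptotic_pairs (reflect ` X) =
      map_prod reflect reflect ` centered_left_asymptotic_pairs X"
    unfolding centered_right_asymptotic_pairs_def centered_left_asymptotic_pairs_def
      centered_left_asymptotic_iff_reflect
    by (force simp: mem_reflect_image_iff)
  moreover have "map_prod reflect reflect (map_prod reflect reflect p) = p"
    for p :: "(int \<Rightarrow> 'a) \<times> (int \<Rightarrow> 'a)"
    by (cases p) simp
  ultimately show ?thesis by (simp add: image_comp comp_def)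
qed

lemma centered_left_asymptotic_pairs_bound:
  assumes ss: "subshift A X" and ap: "aperiodic X" and fin: "finite (left_tails X)"
  shows "finite (centered_left_asymptotic_pairs X)"
    and "card (centered_left_asymptotic_pairs X) \<le> (card (left_tails X) * card A)^2"
proof -
  let ?R = "centered_right_asymptotic_pairs (reflect ` X)"
  have "finite (right_tails (reflect ` X))"
    using fin by (simp add: right_tails_reflect)
  note right =
    centered_right_asymptotic_pairs_bound[OF subshift_reflect[OF ss] aperiodic_reflect[OF ap] this]
  show "finite (centered_left_asymptotic_pairs X)"
    unfolding centered_left_asymptotic_pairs_reflect using right(1) by (rule finite_imageI)
  have "card (centered_left_asymptotic_pairs X) \<le> card ?R"
    unfolding centered_left_asymptotic_pairs_reflect by (rule card_image_le[OF right(1)])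
  with right(2) show "card (centered_left_asymptotic_pairs X) \<le> (card (left_tails X) * card A)^2"
    by (simp add: right_tails_reflect)
qed

theorem lemma6p6:
  fixes A :: "'a set" and X :: "(int \<Rightarrow> 'a) set" and L :: nat
  assumes "subshift A X"
    and "aperiodic X"
    and "finite (right_tails X)" and "card (right_tails X) \<le> L"
    and "finite (left_tails X)" and "card (left_tails X) \<le> L"
  shows "finite (centered_asymptotic_pairs X) \<and>
         card (centered_asymptotic_pairs X) \<le> 2 * L^2 * (card A)^2"
proof -
  let ?right = "centered_right_asymptotic_pairs X" and ?left = "centered_left_asymptotic_pairs X"
  have pairs: "centered_asymptotic_pairs X = ?right \<union> ?left"
    unfolding centered_asymptotic_pairs_def centered_right_asymptotic_pairs_def
      centered_left_asymptotic_pairs_def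
    by auto
  note right = centered_right_asymptotic_pairs_bound[OF assms(1-3)]
  note left = centered_left_asymptotic_pairs_bound[OF assms(1,2,5)]
  have "(card (right_tails X) * card A)^2 \<le> (L * card A)^2"
    "(card (left_tails X) * card A)^2 \<le> (L * card A)^2"
    using assms(4,6) by (simp_all add: power_mono)
  then have "card ?right + card ?left \<le> 2 * (L * card A)^2"
    using right(2) left(2) by linarith
  then have "card (centered_asymptotic_pairs X) \<le> 2 * L^2 * (card A)^2"
    unfolding pairs using card_Un_le[of ?right ?left] by (simp add: power_mult_distrib)
  moreover have "finite (centered_asymptotic_pairs X)"
    unfolding pairs using right(1) left(1) by (rule finite_UnI)
  ultimately show ?thesis by blast
qed

end
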